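(* Let $\phi(z)\in\mathbb{R}[z]$ be a cubic polynomial with negative lead coefficient. If $\mathfrak{K}_\infty\cap\mathbb{R}$ consists of more than one point, then $\phi$ has at least two distinct real periodic points of period two. Moreover, if $\alpha\in\mathbb{R}$ is the smallest such periodic point, then $\phi(\alpha)$ is the largest, and $\mathfrak{K}_\infty\cap\mathbb{R}\subseteq[\alpha,\phi(\alpha)]$.
   Context: The (archimedean) filled Julia set of $\phi$ is $\mathfrak{K}_\infty=\{x\in\mathbb{C}:\{|\phi^n(x)|:n\ge0\}\text{ is bounded}\}$, where $\phi^n$ is the $n$-th iterate of $\phi$. A point $x$ is periodic of period $n$ if $n$ is the least positive integer with $\phi^n(x)=x$. *)

theory Defs
  imports "HOL-Analysis.Analysis" "HOL-Computational_Algebra.Polynomial"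
begin

definition filled_julia :: "complex poly \<Rightarrow> complex set" where
  "filled_julia p = {x. bounded (range (\<lambda>n. (poly p ^^ n) x))}"

definition periodic_of_period :: "('a \<Rightarrow> 'a) \<Rightarrow> nat \<Rightarrow> 'a \<Rightarrow> bool" where
  "periodic_of_period f n x \<longleftrightarrow>
     0 < n \<and> (f ^^ n) x = x \<and> (\<forall>m. 0 < m \<and> m < n \<longrightarrow> (f ^^ m) x \<noteq> x)"

end

theory Submission
  imports Defs
begin

text \<open>
  A real cubic dominates every linear function at infinity, so orbits leaving a large interval
  escape, and the set \<open>K\<close> of real points with bounded orbit is compact; it is also completely
  invariant. As the lead coefficient is negative, the polynomial tends to \<open>\<mp>\<infinity>\<close> at \<open>\<plusminus>\<infinity>\<close>.
  If \<open>f(max K) > min K\<close>, the intermediate value theorem on \<open>[max K, \<infinity>)\<close> would produce a point of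
  \<open>K\<close> beyond \<open>max K\<close> mapping to \<open>min K\<close>; hence \<open>f\<close> swaps \<open>min K\<close> and \<open>max K\<close>. These form a
  2-cycle, every point of period two lies in \<open>K\<close>, and so \<open>min K\<close> is the smallest of them.
\<close>

definition bounded_orbits :: "('a::metric_space \<Rightarrow> 'a) \<Rightarrow> 'a set" where
  "bounded_orbits f = {x. bounded (range (\<lambda>n. (f ^^ n) x))}"

lemma poly_map_poly_of_real:
  "poly (map_poly of_real p) (of_real x) = (of_real (poly p x) :: 'a::{real_algebra_1,comm_ring_1})"
  by (induction p) (auto simp: map_poly_pCons)

lemma funpow_poly_map_poly_of_real:
  "(poly (map_poly of_real p) ^^ n) (of_real x) = (of_real ((poly p ^^ n) x) :: 'a::{real_algebra_1,comm_ring_1})"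
  by (induction n) (simp_all add: poly_map_poly_of_real)

lemma of_real_mem_filled_julia_iff:
  "complex_of_real x \<in> filled_julia (map_poly complex_of_real p) \<longleftrightarrow> x \<in> bounded_orbits (poly p)"
  unfolding filled_julia_def bounded_orbits_def bounded_iff
  by (simp add: funpow_poly_map_poly_of_real)

lemma bounded_orbits_step_iff: "f x \<in> bounded_orbits f \<longleftrightarrow> x \<in> bounded_orbits f"
proof -
  have "range (\<lambda>n. (f ^^ n) x) = insert x (range (\<lambda>n. (f ^^ n) (f x)))"
    by (subst UNIV_nat_eq) (simp add: image_image funpow_Suc_right del: funpow.simps)
  then show ?thesis
    unfolding bounded_orbits_def by simp
qed

lemma periodic_mem_bounded_orbits:
  assumes "periodic_of_period f n x"
  shows "x \<in> bounded_orbits f"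
proof -
  have "(f ^^ n) x = x" "0 < n"
    using assms by (auto simp: periodic_of_period_def)
  have "(f ^^ k) x \<in> (\<lambda>k. (f ^^ k) x) ` {..<n}" for k
    using \<open>(f ^^ n) x = x\<close> \<open>0 < n\<close> by (metis funpow_mod_eq lessThan_iff mod_less_divisor imageI)
  then have "range (\<lambda>k. (f ^^ k) x) \<subseteq> (\<lambda>k. (f ^^ k) x) ` {..<n}"
    by blast
  then show ?thesis
    unfolding bounded_orbits_def by (auto intro: bounded_subset[OF finite_imp_bounded])
qed

lemma periodic_of_period_2_iff:
  "periodic_of_period f 2 x \<longleftrightarrow> f (f x) = x \<and> f x \<noteq> x"
proof -
  have "(\<forall>k::nat. 0 < k \<and> k < 2 \<longrightarrow> P k) \<longleftrightarrow> P 1" for P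
    by (auto simp: less_2_cases_iff)
  then show ?thesis
    unfolding periodic_of_period_def by (simp add: numeral_2_eq_2)
qed

context
  fixes f :: "'a::real_normed_vector \<Rightarrow> 'a" and R c :: real
  assumes radius_pos: "0 < R" and rate: "1 < c"
    and escape: "\<And>x. R \<le> norm x \<Longrightarrow> c * norm x \<le> norm (f x)"
begin

lemma escaping_orbit_growth:
  assumes "R \<le> norm x"
  shows "c ^ n * norm x \<le> norm ((f ^^ n) x)"
proof (induction n)
  case (Suc n)
  have "norm x \<le> c ^ n * norm x"
    using rate by (simp add: mult_le_cancel_right1)
  then have "R \<le> norm ((f ^^ n) x)"
    using Suc assms by linarith
  then have "c * norm ((f ^^ n) x) \<le> norm ((f ^^ Suc n) x)"
    by (simp add: escape)
  moreover have "c ^ Suc n * norm x \<le> c * norm ((f ^^ n) x)"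
    using Suc rate by (simp add: mult.assoc mult_left_mono)
  ultimately show ?case
    by simp
qed simp

lemma bounded_orbits_eq_escape_radius:
  "bounded_orbits f = {x. \<forall>n. norm ((f ^^ n) x) \<le> R}"
proof (intro set_eqI iffI)
  fix x assume "x \<in> {x. \<forall>n. norm ((f ^^ n) x) \<le> R}"
  then show "x \<in> bounded_orbits f"
    unfolding bounded_orbits_def bounded_iff by auto
next
  fix x assume "x \<in> bounded_orbits f"
  then obtain B where B: "\<And>n. norm ((f ^^ n) x) \<le> B"
    unfolding bounded_orbits_def bounded_iff by auto
  show "x \<in> {x. \<forall>n. norm ((f ^^ n) x) \<le> R}"
  proof (rule ccontr)
    assume "x \<notin> {x. \<forall>n. norm ((f ^^ n) x) \<le> R}"
    then obtain n where n: "R < norm ((f ^^ n) x)"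
      by (auto simp: not_le)
    obtain j where j: "B / R < c ^ j"
      using real_arch_pow[OF rate] by blast
    have "c ^ j * R \<le> c ^ j * norm ((f ^^ n) x)"
      using n rate by simp
    also have "\<dots> \<le> norm ((f ^^ (j + n)) x)"
      using escaping_orbit_growth[of "(f ^^ n) x" j] n by (simp add: funpow_add)
    finally show False
      using B[of "j + n"] j radius_pos by (simp add: field_simps)
  qed
qed

end

lemma continuous_on_funpow:
  assumes "continuous_on S f" "f ` S \<subseteq> S"
  shows "continuous_on S (f ^^ n)"
proof (induction n)
  case (Suc n)
  have "continuous_on S ((f ^^ n) \<circ> f)"
    using continuous_on_compose[OF assms(1) continuous_on_subset[OF Suc assms(2)]] .
  then show ?case
    by (simp only: funpow_Suc_right)
qed (simp add: continuous_on_id)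

lemma compact_bounded_orbits:
  fixes f :: "'a::{real_normed_vector,heine_borel} \<Rightarrow> 'a"
  assumes "continuous_on UNIV f" "0 < R" "1 < c"
    and "\<And>x. R \<le> norm x \<Longrightarrow> c * norm x \<le> norm (f x)"
  shows "compact (bounded_orbits f)"
proof -
  have eq: "bounded_orbits f = (\<Inter>n. (f ^^ n) -` cball 0 R)"
    using bounded_orbits_eq_escape_radius[OF assms(2-4)] by auto
  have "closed ((f ^^ n) -` cball 0 R)" for n
    using continuous_on_funpow[OF assms(1)]
    by (intro continuous_closed_vimage) (auto simp: continuous_on_eq_continuous_at)
  then have "closed (bounded_orbits f)"
    unfolding eq by blast
  moreover have "bounded_orbits f \<subseteq> (f ^^ 0) -` cball 0 R"
    unfolding eq by blast
  then have "bounded (bounded_orbits f)"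
    by (auto intro: bounded_subset[of "cball 0 R"])
  ultimately show ?thesis
    by (simp add: compact_eq_bounded_closed)
qed

lemma eventually_poly_ge_linear_at_infinity:
  fixes p :: "'a::real_normed_field poly"
  assumes "2 \<le> degree p"
  shows "\<forall>\<^sub>F x in at_infinity. c * norm x \<le> norm (poly p x)"
proof -
  have "((\<lambda>x. poly [:0, 1:] x / poly p x) \<longlongrightarrow> 0) at_infinity"
    by (rule poly_divide_tendsto_0_at_infinity) (use assms in simp)
  then have "\<forall>\<^sub>F x in at_infinity. norm (x / poly p x) < 1 / max c 1"
    by (auto dest!: tendstoD[of _ 0 _ "1 / max c 1"] simp: dist_norm)
  moreover have "\<forall>\<^sub>F x in at_infinity. 1 \<le> norm (poly p x)"
    using filterlim_at_infinity_imp_norm_at_top[OF filterlim_poly_at_infinity[of p]] assms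
    by (auto simp: filterlim_at_top)
  ultimately show ?thesis
  proof eventually_elim
    case (elim x)
    have "0 < norm (poly p x)"
      using elim(2) by linarith
    then have "norm x * max c 1 < norm (poly p x)"
      using elim(1) by (simp add: norm_divide field_simps)
    moreover have "c * norm x \<le> norm x * max c 1"
      by (metis max.cobounded1 mult.commute mult_right_mono norm_ge_zero)
    ultimately show ?case
      by linarith
  qed
qed

lemma filterlim_poly_odd_degree_neg_lead:
  fixes p :: "real poly"
  assumes "odd (degree p)" "lead_coeff p < 0"
  shows "filterlim (poly p) at_bot at_top" "filterlim (poly p) at_top at_bot"
proof -
  define q where "q x = poly p x / x ^ degree p" for x
  have q: "(q \<longlongrightarrow> lead_coeff p) at_infinity"
    unfolding q_def by (rule poly_divide_tendsto_aux)
  have factor: "poly p x = q x * x ^ degree p" if "x \<noteq> 0" for x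
    using that by (simp add: q_def)
  have deg: "0 < degree p"
    using assms(1) by (rule odd_pos)
  have "filterlim (\<lambda>x. q x * x ^ degree p) at_bot at_top"
    using filterlim_pow_at_top[OF deg filterlim_ident] q assms(2)
    by (intro filterlim_tendsto_neg_mult_at_bot[OF tendsto_mono[OF at_top_le_at_infinity]])
  moreover have "\<forall>\<^sub>F x in at_top. poly p x = q x * x ^ degree p"
    using eventually_gt_at_top[of 0] by eventually_elim (simp add: factor)
  ultimately show "filterlim (poly p) at_bot at_top"
    by (simp add: filterlim_cong)
  have "filterlim (\<lambda>x. q x * x ^ degree p) at_top at_bot"
    using filterlim_pow_at_bot_odd[OF deg filterlim_ident assms(1)] q assms(2)
    by (subst filterlim_tendsto_neg_mult_at_top_iff[OF tendsto_mono[OF at_bot_le_at_infinity]])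
  moreover have "\<forall>\<^sub>F x in at_bot. poly p x = q x * x ^ degree p"
    using eventually_gt_at_bot[of 0] by eventually_elim (simp add: factor)
  ultimately show "filterlim (poly p) at_top at_bot"
    by (simp add: filterlim_cong)
qed

lemma greatest_invariant_maps_to_least:
  fixes f :: "real \<Rightarrow> real"
  assumes "continuous_on UNIV f" "\<And>x. f x \<in> K \<longleftrightarrow> x \<in> K"
    and "m \<in> K" "\<And>x. x \<in> K \<Longrightarrow> m \<le> x" "M \<in> K" "\<And>x. x \<in> K \<Longrightarrow> x \<le> M"
    and "filterlim f at_bot at_top"
  shows "f M = m"
proof (rule ccontr)
  assume "f M \<noteq> m"
  moreover have "m \<le> f M"
    using assms(2-5) by blast
  ultimately have "m < f M"
    by simp
  have "\<forall>\<^sub>F x in at_top. M < x \<and> f x < m"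
    using eventually_gt_at_top[of M] assms(7) by (auto simp: filterlim_at_bot_dense intro: eventually_conj)
  then obtain x1 where "M < x1" "f x1 < m"
    by (auto simp: eventually_at_top_linorder)
  then obtain x where "M \<le> x" "x \<le> x1" "f x = m"
    using IVT2'[of f x1 m M] \<open>m < f M\<close> continuous_on_subset[OF assms(1)] by fastforce
  then have "x \<in> K" "x \<noteq> M"
    using assms(2,3) \<open>f M \<noteq> m\<close> by auto
  then show False
    using \<open>M \<le> x\<close> assms(6) by force
qed

lemma least_invariant_maps_to_greatest:
  fixes f :: "real \<Rightarrow> real"
  assumes "continuous_on UNIV f" "\<And>x. f x \<in> K \<longleftrightarrow> x \<in> K"
    and "m \<in> K" "\<And>x. x \<in> K \<Longrightarrow> m \<le> x" "M \<in> K" "\<And>x. x \<in> K \<Longrightarrow> x \<le> M"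
    and "filterlim f at_top at_bot"
  shows "f m = M"
proof -
  define g where "g x = - f (- x)" for x
  have reflected: "x \<in> uminus ` K \<longleftrightarrow> - x \<in> K" for x :: real
    by (metis image_eqI minus_minus imageE)
  have cont: "continuous_on UNIV g"
    unfolding g_def
    using continuous_on_compose2[OF assms(1) continuous_on_minus[OF continuous_on_id]]
    by (intro continuous_on_minus) auto
  have invariant: "g x \<in> uminus ` K \<longleftrightarrow> x \<in> uminus ` K" for x
    using assms(2)[of "- x"] by (simp add: reflected g_def)
  have limit: "filterlim g at_bot at_top"
    unfolding g_def filterlim_uminus_at_bot minus_minus
    by (rule filterlim_compose[OF assms(7) filterlim_uminus_at_bot_at_top])
  have "g (- m) = - M"
    by (rule greatest_invariant_maps_to_least[OF cont invariant _ _ _ _ limit])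
      (use assms(3-6) reflected in force)+
  then show ?thesis
    by (simp add: g_def)
qed


lemma bounded_orbits_extremes_swap:
  fixes p :: "real poly"
  assumes "odd (degree p)" "2 \<le> degree p" "lead_coeff p < 0"
    and "x \<in> bounded_orbits (poly p)" "y \<in> bounded_orbits (poly p)" "x \<noteq> y"
  obtains m M where "m < M" "bounded_orbits (poly p) \<subseteq> {m..M}" "poly p m = M" "poly p M = m"
proof -
  define K where "K = bounded_orbits (poly p)"
  have cont: "continuous_on UNIV (poly p)"
    by (intro continuous_on_poly continuous_on_id)
  obtain b where "\<forall>x. b \<le> norm x \<longrightarrow> 2 * norm x \<le> norm (poly p x)"
    using eventually_poly_ge_linear_at_infinity[of p 2] assms(2)
    by (auto simp: eventually_at_infinity)
  then have "compact K"
    unfolding K_def by (intro compact_bounded_orbits[OF cont, of "max b 1" 2]) auto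
  moreover have "x \<in> K" "y \<in> K"
    using assms(4,5) by (simp_all add: K_def)
  ultimately obtain m M where m: "m \<in> K" "\<And>x. x \<in> K \<Longrightarrow> m \<le> x"
    and M: "M \<in> K" "\<And>x. x \<in> K \<Longrightarrow> x \<le> M"
    using compact_attains_inf compact_attains_sup by (metis empty_iff)
  have "m < M"
    using m(2)[OF \<open>x \<in> K\<close>] M(2)[OF \<open>x \<in> K\<close>] m(2)[OF \<open>y \<in> K\<close>] M(2)[OF \<open>y \<in> K\<close>] assms(6)
    by linarith
  have invariant: "poly p x \<in> K \<longleftrightarrow> x \<in> K" for x
    unfolding K_def by (rule bounded_orbits_step_iff)
  note limits = filterlim_poly_odd_degree_neg_lead[OF assms(1,3)]
  show thesis
  proof (rule that[OF \<open>m < M\<close>])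
    show "bounded_orbits (poly p) \<subseteq> {m..M}"
      using m M unfolding K_def by auto
    show "poly p m = M"
      by (rule least_invariant_maps_to_greatest[OF cont invariant m M limits(2)])
    show "poly p M = m"
      by (rule greatest_invariant_maps_to_least[OF cont invariant m M limits(1)])
  qed
qed

theorem lemma4p11:
  fixes phi :: "real poly"
  assumes "degree phi = 3"
    and "lead_coeff phi < 0"
    and "\<exists>a b. a \<noteq> b \<and> complex_of_real a \<in> filled_julia (map_poly complex_of_real phi)
                 \<and> complex_of_real b \<in> filled_julia (map_poly complex_of_real phi)"
  shows "(\<exists>a b. a \<noteq> b \<and> periodic_of_period (poly phi) 2 a \<and> periodic_of_period (poly phi) 2 b)
    \<and> (\<forall>\<alpha>. periodic_of_period (poly phi) 2 \<alpha>
           \<and> (\<forall>y. periodic_of_period (poly phi) 2 y \<longrightarrow> \<alpha> \<le> y) \<longrightarrow>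
          periodic_of_period (poly phi) 2 (poly phi \<alpha>)
          \<and> (\<forall>y. periodic_of_period (poly phi) 2 y \<longrightarrow> y \<le> poly phi \<alpha>)
          \<and> {x::real. complex_of_real x \<in> filled_julia (map_poly complex_of_real phi)}
              \<subseteq> {\<alpha>..poly phi \<alpha>})"
proof -
  define K where "K = bounded_orbits (poly phi)"
  have julia: "{x. complex_of_real x \<in> filled_julia (map_poly complex_of_real phi)} = K"
    by (simp add: K_def of_real_mem_filled_julia_iff)
  obtain x y where "x \<in> K" "y \<in> K" "x \<noteq> y"
    using assms(3) julia by blast
  moreover have "odd (degree phi)" "2 \<le> degree phi"
    using assms(1) by simp_all
  ultimately obtain m M where "m < M" and bounds: "K \<subseteq> {m..M}" and "poly phi m = M" "poly phi M = m"
    using bounded_orbits_extremes_swap[of phi x y] assms(2) unfolding K_def by blast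
  then have cycle: "periodic_of_period (poly phi) 2 m" "periodic_of_period (poly phi) 2 M"
    by (auto simp: periodic_of_period_2_iff)
  have periodic_in_K: "periodic_of_period (poly phi) 2 y \<Longrightarrow> y \<in> K" for y
    unfolding K_def by (rule periodic_mem_bounded_orbits)
  show ?thesis
  proof (rule conjI[OF _ allI[OF impI]])
    show "\<exists>a b. a \<noteq> b \<and> periodic_of_period (poly phi) 2 a \<and> periodic_of_period (poly phi) 2 b"
      using cycle \<open>m < M\<close> by (intro exI[of _ m] exI[of _ M]) simp
  next
    fix \<alpha>
    assume "periodic_of_period (poly phi) 2 \<alpha> \<and> (\<forall>y. periodic_of_period (poly phi) 2 y \<longrightarrow> \<alpha> \<le> y)"
    then have "\<alpha> \<le> m" "\<alpha> \<in> K"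
      using cycle(1) periodic_in_K by auto
    then have "\<alpha> = m"
      using subsetD[OF bounds] by fastforce
    then show "periodic_of_period (poly phi) 2 (poly phi \<alpha>)
          \<and> (\<forall>y. periodic_of_period (poly phi) 2 y \<longrightarrow> y \<le> poly phi \<alpha>)
          \<and> {x. complex_of_real x \<in> filled_julia (map_poly complex_of_real phi)} \<subseteq> {\<alpha>..poly phi \<alpha>}"
      using cycle(2) subsetD[OF bounds periodic_in_K] bounds \<open>poly phi m = M\<close>
      unfolding julia by auto
  qed
qed

end
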